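(* For real parameters $a,b,c,e>-1$ and $d>0$ let $$J_3(a,b,c,d,e)=\iiint\limits_{[0,1]^3}\frac{x^b(1-x)^cy^e(1-y)^az^a(1-z)^c}{(1-z+xyz)^d}\,\mathrm d x\,\mathrm d y\,\mathrm d z$$ (whenever convergent) and $K(a,b,c,d,e)=J_3(a,b,c,d+1,e)/J_3(a,b,c,d,e)$. Then, with $K_1=\log3+\frac{\pi}{\sqrt3}$, $$K(0,0,0,2/3,1/3)=-\frac{K_1-2}{2(K_1-3)}.$$ *)

theory Defs
  imports "HOL-Analysis.Analysis"
begin

definition J3 :: "real \<Rightarrow> real \<Rightarrow> real \<Rightarrow> real \<Rightarrow> real \<Rightarrow> real" where
  "J3 a b c d e =
     (LINT p : {0..1} \<times> {0..1} \<times> {0..1} | lborel.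
        (case p of (x, y, z) \<Rightarrow>
          x powr b * (1 - x) powr c * y powr e * (1 - y) powr a * z powr a * (1 - z) powr c
          / (1 - z + x * y * z) powr d))"

definition K :: "real \<Rightarrow> real \<Rightarrow> real \<Rightarrow> real \<Rightarrow> real \<Rightarrow> real" where
  "K a b c d e = J3 a b c (d + 1) e / J3 a b c d e"

definition K1 :: real where
  "K1 = ln 3 + pi / sqrt 3"

end

theory Submission
  imports Defs
begin

text \<open>
  For \<open>a = b = c = 0\<close> the integrand is \<open>y\<^sup>e (1 - (1 - xy) z)\<^sup>-\<^sup>d\<close>. Integrating out \<open>z\<close>
  leaves \<open>y\<^sup>e G d (xy)\<close> with \<open>G d t = (1 - t\<^sup>1\<^sup>-\<^sup>d) / ((1 - t)(1 - d))\<close>; substituting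
  \<open>t = xy\<close> and exchanging the order of integration over the triangle \<open>0 < t < y < 1\<close>
  gives \<open>J\<^sub>3 = \<integral>\<^sub>0\<^sup>1 G d t (1 - t\<^sup>e) / e dt\<close>. For \<open>e = 1/3\<close> the substitution \<open>t = s\<^sup>3\<close>
  makes the integrand rational, namely \<open>27 s\<^sup>2 (1 - s) / (s\<^sup>2 + s + 1)\<close> for \<open>d = 2/3\<close> and
  \<open>27/2 (1 - s\<^sup>2) / (s\<^sup>2 + s + 1)\<close> for \<open>d = 5/3\<close>. Both are integrated with the primitive
  \<open>Q\<close> of \<open>(s + 2) / (s\<^sup>2 + s + 1)\<close>, whose increment over \<open>[0, 1]\<close> is \<open>K\<^sub>1 / 2\<close>.
  All integrals are taken as nonnegative (\<open>ennreal\<close>) integrals, so Tonelli and the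
  substitutions apply without any integrability side conditions.
\<close>

lemma sq_add_self_add_one_pos: "0 < (s::real)^2 + s + 1"
proof -
  have "0 \<le> (s + 1/2)^2" by simp
  then show ?thesis by (simp add: power2_eq_square algebra_simps)
qed

definition Q :: "real \<Rightarrow> real" where
  "Q s = ln (s^2 + s + 1) / 2 + sqrt 3 * arctan ((2 * s + 1) / sqrt 3)"

lemma has_real_derivative_Q: "(Q has_real_derivative (s + 2) / (s^2 + s + 1)) (at s)"
proof -
  have pos: "0 < s^2 + s + 1" by (rule sq_add_self_add_one_pos)
  have "((\<lambda>s. (2 * s + 1) / sqrt 3) has_real_derivative 2 / sqrt 3) (at s)"
    by (intro DERIV_cdivide) (auto intro!: derivative_eq_intros)
  from DERIV_chain2[OF DERIV_arctan this]
  have "((\<lambda>s. sqrt 3 * arctan ((2 * s + 1) / sqrt 3)) has_real_derivative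
      sqrt 3 * (inverse (1 + ((2 * s + 1) / sqrt 3)^2) * (2 / sqrt 3))) (at s)"
    by (rule DERIV_cmult)
  moreover have "sqrt 3 * (inverse (1 + ((2 * s + 1) / sqrt 3)^2) * (2 / sqrt 3)) = 3 / (2 * (s^2 + s + 1))"
  proof -
    have square: "1 + ((2 * s + 1) / sqrt 3)^2 = 4 * (s^2 + s + 1) / 3"
      by (simp add: power_divide power2_eq_square field_simps)
    have "sqrt 3 * (inverse (1 + ((2 * s + 1) / sqrt 3)^2) * (2 / sqrt 3))
        = 2 * inverse (4 * (s^2 + s + 1) / 3)"
      unfolding square by simp
    also have "\<dots> = 3 / (2 * (s^2 + s + 1))"
      using pos by (simp add: field_simps)
    finally show ?thesis .
  qed
  ultimately have arctan_part: "((\<lambda>s. sqrt 3 * arctan ((2 * s + 1) / sqrt 3)) has_real_derivative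
      3 / (2 * (s^2 + s + 1))) (at s)"
    by (simp only:)
  have ln_part: "((\<lambda>s. ln (s^2 + s + 1) / 2) has_real_derivative (2 * s + 1) / (2 * (s^2 + s + 1))) (at s)"
    using pos by (auto intro!: derivative_eq_intros simp: field_simps)
  have "(Q has_real_derivative (2 * s + 1) / (2 * (s^2 + s + 1)) + 3 / (2 * (s^2 + s + 1))) (at s)"
    unfolding Q_def by (rule DERIV_add[OF ln_part arctan_part])
  moreover have "(2 * s + 1) / (2 * X) + 3 / (2 * X) = (s + 2) / X" if "X \<noteq> 0" for X :: real
    using that by (simp add: field_simps)
  ultimately show ?thesis by (metis pos less_irrefl)
qed

lemma Q_1_minus_Q_0: "Q 1 - Q 0 = K1 / 2"
proof -
  have "arctan (sqrt 3) = pi / 3" using arctan_tan[of "pi / 3"] tan_60 by simp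
  then have Q_1: "Q 1 = ln 3 / 2 + sqrt 3 * (pi / 3)"
    unfolding Q_def by (simp add: real_div_sqrt)
  have "arctan (1 / sqrt 3) = pi / 6" using arctan_tan[of "pi / 6"] tan_30 by simp
  then have Q_0: "Q 0 = sqrt 3 * (pi / 6)" unfolding Q_def by simp
  have "pi / sqrt 3 = pi / 3 * (3 / sqrt 3)" by simp
  then have pi_div_sqrt_3: "pi / sqrt 3 = pi / 3 * sqrt 3" by (simp add: real_div_sqrt)
  show ?thesis unfolding K1_def pi_div_sqrt_3 Q_1 Q_0 by (simp add: field_simps)
qed

lemma nn_integral_Ioo_eq_diff:
  fixes P R :: "real \<Rightarrow> real"
  assumes "a \<le> b"
    and deriv: "\<And>s. s \<in> {a..b} \<Longrightarrow> (P has_real_derivative R s) (at s)"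
    and nonneg: "\<And>s. s \<in> {a..b} \<Longrightarrow> 0 \<le> R s"
  shows "(\<integral>\<^sup>+s\<in>{a<..<b}. ennreal (R s) \<partial>lborel) = ennreal (P b - P a)"
    and "0 \<le> P b - P a"
proof -
  have "(R has_integral P b - P a) {a..b}"
    using assms(1) deriv
    by (intro fundamental_theorem_of_calculus)
       (auto simp: has_real_derivative_iff_has_vector_derivative[symmetric]
             intro: has_field_derivative_at_within)
  then show "0 \<le> P b - P a"
    using nonneg by (rule has_integral_nonneg)
  from \<open>(R has_integral P b - P a) {a..b}\<close>
  show "(\<integral>\<^sup>+s\<in>{a<..<b}. ennreal (R s) \<partial>lborel) = ennreal (P b - P a)"
    unfolding has_integral_Icc_iff_Ioo
    by (rule nn_integral_has_integral_lebesgue'[rotated]) (use nonneg in auto)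
qed

lemma nn_integral_Icc_eq_Ioo:
  fixes f :: "real \<Rightarrow> ennreal"
  shows "(\<integral>\<^sup>+x\<in>{a..b}. f x \<partial>lborel) = (\<integral>\<^sup>+x\<in>{a<..<b}. f x \<partial>lborel)"
  by (rule nn_integral_cong_AE)
     (use AE_lborel_singleton[of a] AE_lborel_singleton[of b]
       in \<open>eventually_elim, auto split: split_indicator\<close>)

lemma nn_integral_lborel_triple:
  fixes f :: "real \<times> real \<times> real \<Rightarrow> ennreal"
  assumes [measurable]: "f \<in> borel_measurable borel"
  shows "(\<integral>\<^sup>+p. f p \<partial>lborel) = (\<integral>\<^sup>+x. \<integral>\<^sup>+y. \<integral>\<^sup>+z. f (x, y, z) \<partial>lborel \<partial>lborel \<partial>lborel)"
proof -
  have "(\<integral>\<^sup>+p. f p \<partial>lborel) = (\<integral>\<^sup>+x. \<integral>\<^sup>+q. f (x, q) \<partial>lborel \<partial>lborel)"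
    by (subst lborel_prod[symmetric], rule lborel.nn_integral_fst[symmetric]) (simp add: lborel_prod)
  also have "\<dots> = (\<integral>\<^sup>+x. \<integral>\<^sup>+y. \<integral>\<^sup>+z. f (x, y, z) \<partial>lborel \<partial>lborel \<partial>lborel)"
    by (intro nn_integral_cong, subst lborel_prod[symmetric], rule lborel.nn_integral_fst[symmetric])
       (simp add: lborel_prod)
  finally show ?thesis .
qed

lemma set_nn_integral_lborel_Times3:
  fixes f :: "real \<times> real \<times> real \<Rightarrow> ennreal"
  assumes [measurable]: "f \<in> borel_measurable borel" "A \<in> sets borel" "B \<in> sets borel" "C \<in> sets borel"
  shows "(\<integral>\<^sup>+p\<in>A \<times> B \<times> C. f p \<partial>lborel)
    = (\<integral>\<^sup>+x\<in>A. \<integral>\<^sup>+y\<in>B. \<integral>\<^sup>+z\<in>C. f (x, y, z) \<partial>lborel \<partial>lborel \<partial>lborel)"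
proof -
  have [measurable]: "A \<times> B \<times> C \<in> sets borel"
    by (simp add: borel_prod[symmetric])
  show ?thesis
    by (subst nn_integral_lborel_triple)
       (auto simp: nn_integral_multc[symmetric] mult.assoc intro!: nn_integral_cong split: split_indicator)
qed

lemma set_nn_integral_lborel_swap:
  fixes h :: "real \<Rightarrow> real \<Rightarrow> ennreal"
  assumes [measurable]: "case_prod h \<in> borel_measurable (borel \<Otimes>\<^sub>M borel)" "A \<in> sets borel" "B \<in> sets borel"
  shows "(\<integral>\<^sup>+x\<in>A. \<integral>\<^sup>+y\<in>B. h x y \<partial>lborel \<partial>lborel) = (\<integral>\<^sup>+y\<in>B. \<integral>\<^sup>+x\<in>A. h x y \<partial>lborel \<partial>lborel)"
proof -
  have "(\<integral>\<^sup>+x\<in>A. \<integral>\<^sup>+y\<in>B. h x y \<partial>lborel \<partial>lborel)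
      = (\<integral>\<^sup>+x. \<integral>\<^sup>+y. h x y * indicator B y * indicator A x \<partial>lborel \<partial>lborel)"
    by (auto intro!: nn_integral_cong simp: nn_integral_multc)
  also have "\<dots> = (\<integral>\<^sup>+y. \<integral>\<^sup>+x. h x y * indicator B y * indicator A x \<partial>lborel \<partial>lborel)"
    by (rule lborel_pair.Fubini'[symmetric]) measurable
  also have "\<dots> = (\<integral>\<^sup>+y. \<integral>\<^sup>+x. h x y * indicator A x * indicator B y \<partial>lborel \<partial>lborel)"
    by (simp add: ac_simps)
  also have "\<dots> = (\<integral>\<^sup>+y\<in>B. \<integral>\<^sup>+x\<in>A. h x y \<partial>lborel \<partial>lborel)"
    by (auto intro!: nn_integral_cong simp: nn_integral_multc)
  finally show ?thesis .
qed

lemma nn_integral_Ioo_rescale: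
  fixes g :: "real \<Rightarrow> ennreal"
  assumes [measurable]: "g \<in> borel_measurable borel" and "0 < c"
  shows "ennreal c * (\<integral>\<^sup>+x\<in>{0<..<1}. g (x * c) \<partial>lborel) = (\<integral>\<^sup>+t\<in>{0<..<c}. g t \<partial>lborel)"
proof -
  have "indicator {0<..<c} (c * x) = (indicator {0<..<1} x :: ennreal)" for x
    using \<open>0 < c\<close> by (auto split: split_indicator simp: zero_less_mult_iff)
  moreover have "(\<integral>\<^sup>+t\<in>{0<..<c}. g t \<partial>lborel)
      = ennreal \<bar>c\<bar> * (\<integral>\<^sup>+x. g (0 + c * x) * indicator {0<..<c} (0 + c * x) \<partial>lborel)"
    using \<open>0 < c\<close> by (intro nn_integral_real_affine) auto
  ultimately show ?thesis
    using \<open>0 < c\<close> by (simp add: mult.commute)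
qed

lemma nn_integral_Ioo_triangle_swap:
  fixes f g :: "real \<Rightarrow> ennreal"
  assumes [measurable]: "f \<in> borel_measurable borel" "g \<in> borel_measurable borel"
  shows "(\<integral>\<^sup>+y\<in>{a<..<b}. f y * (\<integral>\<^sup>+t\<in>{a<..<y}. g t \<partial>lborel) \<partial>lborel)
       = (\<integral>\<^sup>+t\<in>{a<..<b}. g t * (\<integral>\<^sup>+y\<in>{t<..<b}. f y \<partial>lborel) \<partial>lborel)"
proof -
  let ?h = "\<lambda>y t. f y * g t * indicator {(t, y). a < t \<and> t < y \<and> y < b} (t, y) :: ennreal"
  have "(\<integral>\<^sup>+y\<in>{a<..<b}. f y * (\<integral>\<^sup>+t\<in>{a<..<y}. g t \<partial>lborel) \<partial>lborel) = (\<integral>\<^sup>+y. \<integral>\<^sup>+t. ?h y t \<partial>lborel \<partial>lborel)"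
    by (auto intro!: nn_integral_cong simp: nn_integral_cmult[symmetric] nn_integral_multc[symmetric]
          split: split_indicator)
  also have "\<dots> = (\<integral>\<^sup>+t. \<integral>\<^sup>+y. ?h y t \<partial>lborel \<partial>lborel)"
    by (rule lborel_pair.Fubini') measurable
  also have "\<dots> = (\<integral>\<^sup>+t\<in>{a<..<b}. g t * (\<integral>\<^sup>+y\<in>{t<..<b}. f y \<partial>lborel) \<partial>lborel)"
    by (auto intro!: nn_integral_cong simp: nn_integral_cmult[symmetric] nn_integral_multc[symmetric]
          ac_simps split: split_indicator)
  finally show ?thesis .
qed

definition G :: "real \<Rightarrow> real \<Rightarrow> real" where
  "G d t = (1 - t powr (1 - d)) / ((1 - t) * (1 - d))"

lemma borel_measurable_G [measurable]: "G d \<in> borel_measurable borel"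
  unfolding G_def by measurable

lemma nn_integral_powr_affine_eq_G:
  assumes "0 < t" "t < 1" "d \<noteq> 1"
  shows "(\<integral>\<^sup>+z\<in>{0<..<1}. ennreal ((1 - (1 - t) * z) powr (- d)) \<partial>lborel) = ennreal (G d t)"
proof -
  define P where "P z = (1 - (1 - t) * z) powr (1 - d) / ((t - 1) * (1 - d))" for z
  have pos: "0 < 1 - (1 - t) * z" if "z \<in> {0..1}" for z
  proof -
    have "(1 - t) * z \<le> 1 - t" using that assms by (intro mult_left_le) auto
    then show ?thesis using assms by linarith
  qed
  have "(P has_real_derivative (1 - (1 - t) * z) powr (- d)) (at z)" if "z \<in> {0..1}" for z
  proof -
    have "(P has_real_derivative
        (1 - d) * (1 - (1 - t) * z) powr (1 - d - 1) * (- (1 - t)) / ((t - 1) * (1 - d))) (at z)"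
      unfolding P_def using pos[OF that] by (auto intro!: derivative_eq_intros)
    moreover have "(1 - d) * w * (- (1 - t)) / ((t - 1) * (1 - d)) = w" for w
    proof -
      have "(1 - d) * w * (- (1 - t)) = w * ((t - 1) * (1 - d))" by (simp add: algebra_simps)
      then show ?thesis using assms by simp
    qed
    moreover have "1 - d - 1 = - d" by simp
    ultimately show ?thesis by (simp only:)
  qed
  moreover have "P 1 - P 0 = G d t"
  proof -
    have "P 1 - P 0 = (t powr (1 - d) - 1) / ((t - 1) * (1 - d))"
      unfolding P_def by (simp add: diff_divide_distrib)
    also have "\<dots> = (- (1 - t powr (1 - d))) / (- ((1 - t) * (1 - d)))"
      by (simp add: algebra_simps)
    finally show ?thesis unfolding G_def by (simp only: minus_divide_divide)
  qed
  ultimately show ?thesis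
    using nn_integral_Ioo_eq_diff(1)[of 0 1 P "\<lambda>z. (1 - (1 - t) * z) powr (- d)"] by simp
qed

lemma nn_integral_Ioo_powr:
  assumes "0 < t" "t \<le> 1" "0 < e"
  shows "(\<integral>\<^sup>+y\<in>{t<..<1}. ennreal (y powr (e - 1)) \<partial>lborel) = ennreal ((1 - t powr e) / e)"
proof -
  have "((\<lambda>y. y powr e / e) has_real_derivative y powr (e - 1)) (at y)" if "y \<in> {t..1}" for y
    using that assms by (auto intro!: derivative_eq_intros)
  then show ?thesis
    using nn_integral_Ioo_eq_diff(1)[of t 1 "\<lambda>y. y powr e / e" "\<lambda>y. y powr (e - 1)"] assms
    by (simp add: diff_divide_distrib)
qed

lemma nn_integral_Ioo_substitution_power:
  fixes W :: "real \<Rightarrow> real"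
  assumes [measurable]: "W \<in> borel_measurable borel" and "0 < n"
  shows "(\<integral>\<^sup>+t\<in>{0<..<1}. ennreal (W t) \<partial>lborel)
    = (\<integral>\<^sup>+s\<in>{0<..<1}. ennreal (W (s ^ n) * (n * s ^ (n - 1))) \<partial>lborel)"
proof -
  have "(\<integral>\<^sup>+t\<in>{0..1}. ennreal (W t) \<partial>lborel) = (\<integral>\<^sup>+t. ennreal (W t * indicator {0 ^ n..1 ^ n} t) \<partial>lborel)"
    using \<open>0 < n\<close> by (intro nn_integral_cong) (simp add: zero_power split: split_indicator)
  also have "\<dots> = (\<integral>\<^sup>+s. ennreal (W (s ^ n) * (n * s ^ (n - 1)) * indicator {0..1} s) \<partial>lborel)"
    by (rule nn_integral_substitution)
       (auto intro!: derivative_eq_intros continuous_intros simp: set_borel_measurable_def)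
  also have "\<dots> = (\<integral>\<^sup>+s\<in>{0..1}. ennreal (W (s ^ n) * (n * s ^ (n - 1))) \<partial>lborel)"
    by (intro nn_integral_cong) (simp split: split_indicator)
  finally show ?thesis by (simp only: nn_integral_Icc_eq_Ioo)
qed

definition J3_integrand :: "real \<Rightarrow> real \<Rightarrow> real \<Rightarrow> real \<Rightarrow> real \<Rightarrow> real \<times> real \<times> real \<Rightarrow> real" where
  "J3_integrand a b c d e = (\<lambda>(x, y, z).
     x powr b * (1 - x) powr c * y powr e * (1 - y) powr a * z powr a * (1 - z) powr c
     / (1 - z + x * y * z) powr d)"

lemma borel_measurable_J3_integrand [measurable]:
  "J3_integrand a b c d e \<in> borel_measurable borel"
proof -
  have "(\<lambda>p. J3_integrand a b c d e (fst p, fst (snd p), snd (snd p)))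
      \<in> borel_measurable (borel \<Otimes>\<^sub>M (borel \<Otimes>\<^sub>M borel))"
    unfolding J3_integrand_def by measurable
  then show ?thesis by (simp add: borel_prod)
qed

lemma J3_eq_enn2real_nn_integral:
  "J3 a b c d e
    = enn2real (\<integral>\<^sup>+p\<in>{0..1} \<times> {0..1} \<times> {0..1}. ennreal (J3_integrand a b c d e p) \<partial>lborel)"
proof -
  let ?C = "{0..1} \<times> {0..1} \<times> {0..1} :: (real \<times> real \<times> real) set"
  have [measurable]: "?C \<in> sets borel"
    by (intro borel_closed closed_Times) auto
  have "J3 a b c d e = (\<integral>p. indicator ?C p * J3_integrand a b c d e p \<partial>lborel)"
    unfolding J3_def J3_integrand_def set_lebesgue_integral_def by simp
  also have "\<dots> = enn2real (\<integral>\<^sup>+p. ennreal (indicator ?C p * J3_integrand a b c d e p) \<partial>lborel)"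
  proof (rule integral_eq_nn_integral)
    show "(\<lambda>p. indicator ?C p * J3_integrand a b c d e p) \<in> borel_measurable lborel"
      by measurable
    show "AE p in lborel. 0 \<le> indicator ?C p * J3_integrand a b c d e p"
      by (auto simp: J3_integrand_def split: prod.splits)
  qed
  also have "\<dots> = enn2real (\<integral>\<^sup>+p\<in>?C. ennreal (J3_integrand a b c d e p) \<partial>lborel)"
    by (intro arg_cong[where f = enn2real] nn_integral_cong) (simp split: split_indicator)
  finally show ?thesis .
qed

text \<open>Only on the open cube: \<open>0 powr 0 = 0\<close>, so the factors \<open>x powr 0\<close> etc. vanish on its boundary.\<close>

lemma J3_integrand_000_interior:
  assumes "x \<in> {0<..<1}" "y \<in> {0<..<1}" "z \<in> {0<..<1}"
  shows "J3_integrand 0 0 0 d e (x, y, z) = y powr e * (1 - (1 - x * y) * z) powr (- d)"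
proof -
  have denominator: "1 - z + x * y * z = 1 - (1 - x * y) * z" by (simp add: algebra_simps)
  show ?thesis
    using assms unfolding J3_integrand_def prod.case denominator by (simp add: powr_minus_divide)
qed

lemma nn_integral_J3_integrand_000_z:
  assumes "d \<noteq> 1" "x \<in> {0<..<1}" "y \<in> {0<..<1}"
  shows "(\<integral>\<^sup>+z\<in>{0<..<1}. ennreal (J3_integrand 0 0 0 d e (x, y, z)) \<partial>lborel)
    = ennreal (y powr e) * ennreal (G d (x * y))"
proof -
  have xy: "0 < x * y" "x * y < 1"
    using assms mult_strict_mono[of x 1 y 1] by auto
  have "(\<integral>\<^sup>+z\<in>{0<..<1}. ennreal (J3_integrand 0 0 0 d e (x, y, z)) \<partial>lborel)
      = (\<integral>\<^sup>+z\<in>{0<..<1}. ennreal (y powr e) * ennreal ((1 - (1 - x * y) * z) powr (- d)) \<partial>lborel)"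
    using assms by (intro set_nn_integral_cong) (auto simp: J3_integrand_000_interior ennreal_mult)
  also have "\<dots> = ennreal (y powr e) * (\<integral>\<^sup>+z\<in>{0<..<1}. ennreal ((1 - (1 - x * y) * z) powr (- d)) \<partial>lborel)"
    by (simp add: mult.assoc nn_integral_cmult)
  finally show ?thesis
    using nn_integral_powr_affine_eq_G[OF xy \<open>d \<noteq> 1\<close>] by simp
qed

lemma nn_integral_J3_integrand_000:
  assumes "d \<noteq> 1" "0 < e"
  shows "(\<integral>\<^sup>+p\<in>{0..1} \<times> {0..1} \<times> {0..1}. ennreal (J3_integrand 0 0 0 d e p) \<partial>lborel)
    = (\<integral>\<^sup>+t\<in>{0<..<1}. ennreal (G d t * ((1 - t powr e) / e)) \<partial>lborel)"
proof -
  let ?I = "{0<..<1} :: real set"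
  have x_integral: "ennreal y * (\<integral>\<^sup>+x\<in>?I. ennreal (G d (x * y)) \<partial>lborel)
      = (\<integral>\<^sup>+t\<in>{0<..<y}. ennreal (G d t) \<partial>lborel)" if "y \<in> ?I" for y
    using that by (intro nn_integral_Ioo_rescale) auto
  have powr_e: "ennreal (y powr e) = ennreal (y powr (e - 1)) * ennreal y" if "y \<in> ?I" for y
    using that powr_mult_base[of y "e - 1"] by (simp add: ennreal_mult[symmetric] mult.commute)
  have y_integral: "(\<integral>\<^sup>+y\<in>{t<..<1}. ennreal (y powr (e - 1)) \<partial>lborel) = ennreal ((1 - t powr e) / e)"
    if "t \<in> ?I" for t
    using that \<open>0 < e\<close> by (intro nn_integral_Ioo_powr) auto
  have "(\<integral>\<^sup>+p\<in>{0..1} \<times> {0..1} \<times> {0..1}. ennreal (J3_integrand 0 0 0 d e p) \<partial>lborel)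
      = (\<integral>\<^sup>+x\<in>?I. \<integral>\<^sup>+y\<in>?I. \<integral>\<^sup>+z\<in>?I. ennreal (J3_integrand 0 0 0 d e (x, y, z))
          \<partial>lborel \<partial>lborel \<partial>lborel)"
    by (subst set_nn_integral_lborel_Times3) (simp_all only: nn_integral_Icc_eq_Ioo, measurable)
  also have "\<dots> = (\<integral>\<^sup>+x\<in>?I. \<integral>\<^sup>+y\<in>?I. ennreal (y powr e) * ennreal (G d (x * y)) \<partial>lborel \<partial>lborel)"
    using \<open>d \<noteq> 1\<close> by (auto intro!: set_nn_integral_cong simp: nn_integral_J3_integrand_000_z)
  also have "\<dots> = (\<integral>\<^sup>+y\<in>?I. \<integral>\<^sup>+x\<in>?I. ennreal (y powr e) * ennreal (G d (x * y)) \<partial>lborel \<partial>lborel)"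
    by (rule set_nn_integral_lborel_swap) measurable
  also have "\<dots> = (\<integral>\<^sup>+y\<in>?I. ennreal (y powr e) * (\<integral>\<^sup>+x\<in>?I. ennreal (G d (x * y)) \<partial>lborel) \<partial>lborel)"
    by (simp add: mult.assoc nn_integral_cmult)
  also have "\<dots> = (\<integral>\<^sup>+y\<in>?I. ennreal (y powr (e - 1)) * (\<integral>\<^sup>+t\<in>{0<..<y}. ennreal (G d t) \<partial>lborel) \<partial>lborel)"
    by (intro set_nn_integral_cong) (auto simp: powr_e x_integral[symmetric] mult.assoc)
  also have "\<dots> = (\<integral>\<^sup>+t\<in>?I. ennreal (G d t) * (\<integral>\<^sup>+y\<in>{t<..<1}. ennreal (y powr (e - 1)) \<partial>lborel) \<partial>lborel)"
    by (rule nn_integral_Ioo_triangle_swap) measurable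
  also have "\<dots> = (\<integral>\<^sup>+t\<in>?I. ennreal (G d t * ((1 - t powr e) / e)) \<partial>lborel)"
  proof (intro set_nn_integral_cong)
    fix t assume "t \<in> space lborel \<inter> ?I"
    then have "t \<in> ?I" by simp
    moreover have "t powr e \<le> 1" using \<open>t \<in> ?I\<close> \<open>0 < e\<close> by (intro powr_le1) auto
    then have "0 \<le> (1 - t powr e) / e" using \<open>0 < e\<close> by simp
    ultimately show "ennreal (G d t) * (\<integral>\<^sup>+y\<in>{t<..<1}. ennreal (y powr (e - 1)) \<partial>lborel)
        = ennreal (G d t * ((1 - t powr e) / e))"
      by (simp only: y_integral ennreal_mult'')
  qed simp_all
  finally show ?thesis .
qed

lemma power_powr: "0 < x \<Longrightarrow> (x ^ n) powr r = x powr (real n * r)"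
  by (simp add: powr_realpow[symmetric] powr_powr)

lemma cube_factorization: "1 - (s::real)^3 = (1 - s) * (s^2 + s + 1)"
  by (simp add: algebra_simps power2_eq_square power3_eq_cube)

lemma J3_000_one_third:
  assumes "d \<noteq> 1"
  shows "J3 0 0 0 d (1/3) = enn2real (\<integral>\<^sup>+s\<in>{0<..<1}.
    ennreal (9 * s^2 * (1 - s powr (3 - 3 * d)) / ((1 - d) * (s^2 + s + 1))) \<partial>lborel)"
proof -
  have integrand: "G d (s^3) * ((1 - (s^3) powr (1/3)) / (1/3)) * (3 * s^2)
      = 9 * s^2 * (1 - s powr (3 - 3 * d)) / ((1 - d) * (s^2 + s + 1))" if "s \<in> {0<..<1}" for s
  proof -
    have cancel: "N / (u * X * k) * (u / (1/3)) * (3 * s2) = 9 * s2 * N / (k * X)"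
      if "u \<noteq> 0" "X \<noteq> 0" for u X k N s2 :: real
      using that by (simp add: field_simps)
    have powr_1_minus_d: "(s^3) powr (1 - d) = s powr (3 - 3 * d)"
      and cube_root: "(s^3) powr (1/3) = s"
      using that by (simp_all add: power_powr algebra_simps)
    have "1 - s \<noteq> 0" "s^2 + s + 1 \<noteq> 0"
      using that sq_add_self_add_one_pos[of s] by auto
    then show ?thesis
      unfolding G_def cube_factorization powr_1_minus_d cube_root by (rule cancel)
  qed
  have "J3 0 0 0 d (1/3) = enn2real (\<integral>\<^sup>+t\<in>{0<..<1}. ennreal (G d t * ((1 - t powr (1/3)) / (1/3))) \<partial>lborel)"
    using assms by (simp add: J3_eq_enn2real_nn_integral nn_integral_J3_integrand_000)
  also have "\<dots> = enn2real (\<integral>\<^sup>+s\<in>{0<..<1}.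
      ennreal (G d (s^3) * ((1 - (s^3) powr (1/3)) / (1/3)) * (3 * s^2)) \<partial>lborel)"
    using nn_integral_Ioo_substitution_power[of "\<lambda>t. G d t * ((1 - t powr (1/3)) / (1/3))" 3] by simp
  also have "\<dots> = enn2real (\<integral>\<^sup>+s\<in>{0<..<1}.
      ennreal (9 * s^2 * (1 - s powr (3 - 3 * d)) / ((1 - d) * (s^2 + s + 1))) \<partial>lborel)"
    by (intro arg_cong[where f = enn2real] set_nn_integral_cong arg_cong[where f = ennreal] integrand) auto
  finally show ?thesis .
qed

lemma J3_000_one_third_eq_diff:
  fixes P R :: "real \<Rightarrow> real"
  assumes "d \<noteq> 1"
    and integrand: "\<And>s. s \<in> {0<..<1} \<Longrightarrow> 9 * s^2 * (1 - s powr (3 - 3 * d)) / ((1 - d) * (s^2 + s + 1)) = R s"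
    and deriv: "\<And>s. (P has_real_derivative R s) (at s)"
    and nonneg: "\<And>s. s \<in> {0..1} \<Longrightarrow> 0 \<le> R s"
  shows "J3 0 0 0 d (1/3) = P 1 - P 0"
proof -
  have "J3 0 0 0 d (1/3) = enn2real (\<integral>\<^sup>+s\<in>{0<..<1}. ennreal (R s) \<partial>lborel)"
    unfolding J3_000_one_third[OF \<open>d \<noteq> 1\<close>]
    by (intro arg_cong[where f = enn2real] set_nn_integral_cong) (auto simp: integrand)
  also have "\<dots> = P 1 - P 0"
    using nn_integral_Ioo_eq_diff[of 0 1 P R] deriv nonneg by simp
  finally show ?thesis .
qed

lemma J3_000_two_thirds_one_third: "J3 0 0 0 (2/3) (1/3) = 27 * (3 - K1) / 2"
proof -
  define P where "P s = 27 * (2 * s - s^2 / 2 - Q s)" for s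
  have "J3 0 0 0 (2/3) (1/3) = P 1 - P 0"
  proof (rule J3_000_one_third_eq_diff[where R = "\<lambda>s. 27 * s^2 * (1 - s) / (s^2 + s + 1)"])
    fix s :: real
    have X: "0 < s^2 + s + 1" by (rule sq_add_self_add_one_pos)
    show "0 \<le> 27 * s^2 * (1 - s) / (s^2 + s + 1)" if "s \<in> {0..1}"
      using that X by simp
    show "9 * s^2 * (1 - s powr (3 - 3 * (2/3))) / ((1 - 2/3) * (s^2 + s + 1))
        = 27 * s^2 * (1 - s) / (s^2 + s + 1)" if "s \<in> {0<..<1}"
      using that X by (simp add: field_simps)
    have "(P has_real_derivative 27 * (2 - s - (s + 2) / (s^2 + s + 1))) (at s)"
      unfolding P_def by (auto intro!: derivative_eq_intros has_real_derivative_Q)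
    moreover have "27 * (2 - s - (s + 2) / (s^2 + s + 1)) = 27 * s^2 * (1 - s) / (s^2 + s + 1)"
      using X by (simp add: field_simps power2_eq_square)
    ultimately show "(P has_real_derivative 27 * s^2 * (1 - s) / (s^2 + s + 1)) (at s)"
      by (simp only:)
  qed simp
  also have "\<dots> = 27 * (3 - K1) / 2"
    using Q_1_minus_Q_0 unfolding P_def by (simp add: algebra_simps)
  finally show ?thesis .
qed

lemma J3_000_five_thirds_one_third: "J3 0 0 0 (5/3) (1/3) = 27 * (K1 - 2) / 4"
proof -
  define P where "P s = 27 / 2 * (Q s - s)" for s
  have "J3 0 0 0 (5/3) (1/3) = P 1 - P 0"
  proof (rule J3_000_one_third_eq_diff[where R = "\<lambda>s. 27 / 2 * (1 - s^2) / (s^2 + s + 1)"])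
    fix s :: real
    have X: "0 < s^2 + s + 1" by (rule sq_add_self_add_one_pos)
    show "0 \<le> 27 / 2 * (1 - s^2) / (s^2 + s + 1)" if "s \<in> {0..1}"
      using that X by (simp add: power_le_one)
    show "9 * s^2 * (1 - s powr (3 - 3 * (5/3))) / ((1 - 5/3) * (s^2 + s + 1))
        = 27 / 2 * (1 - s^2) / (s^2 + s + 1)" if "s \<in> {0<..<1}"
    proof -
      have "s powr (3 - 3 * (5/3)) = 1 / s^2"
        using that by (simp add: powr_neg_numeral)
      then have numerator: "9 * s^2 * (1 - s powr (3 - 3 * (5/3))) = 9 * (s^2 - 1)"
        using that by (simp add: field_simps)
      show ?thesis
        unfolding numerator using X by (simp add: field_simps)
    qed
    have "(P has_real_derivative 27 / 2 * ((s + 2) / (s^2 + s + 1) - 1)) (at s)"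
      unfolding P_def by (auto intro!: derivative_eq_intros has_real_derivative_Q)
    moreover have "27 / 2 * ((s + 2) / (s^2 + s + 1) - 1) = 27 / 2 * (1 - s^2) / (s^2 + s + 1)"
      using X by (simp add: field_simps power2_eq_square)
    ultimately show "(P has_real_derivative 27 / 2 * (1 - s^2) / (s^2 + s + 1)) (at s)"
      by (simp only:)
  qed simp
  also have "\<dots> = 27 * (K1 - 2) / 4"
    using Q_1_minus_Q_0 unfolding P_def by (simp add: field_simps)
  finally show ?thesis .
qed

theorem mainTheorem2:
  shows "K 0 0 0 (2/3) (1/3) = - (K1 - 2) / (2 * (K1 - 3))"
proof -
  have five_thirds: "(2/3 :: real) + 1 = 5/3" by simp
  have "K 0 0 0 (2/3) (1/3) = (27 * (K1 - 2) / 4) / (27 * (3 - K1) / 2)"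
    unfolding K_def five_thirds J3_000_two_thirds_one_third J3_000_five_thirds_one_third ..
  also have "\<dots> = - (K1 - 2) / (2 * (K1 - 3))"
    by (cases "K1 = 3") (auto simp: field_simps)
  finally show ?thesis .
qed

end
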